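(* Let $r\geq 2$ be an integer and let $x_i$ ($1\le i\le r$) and $y_{i,j}$ ($2\le i\le j\le r$) be formal variables. Let $\mathcal{U}_r$ be the set of unordered increasing trees with vertex-set $\{1,\dots,r\}$. For $T\in\mathcal{U}_r$ define \[ \mathrm{wt}_y(T)=\prod_{v=2}^r\Big(x_{f_T(v)}\sum_{u\in \mathfrak{h}_T(v)} y_{v,u}\Big). \] Then \[ \sum_{T\in\mathcal{U}_r}\mathrm{wt}_y(T)= x_1\,y_{r,r}\prod_{i=2}^{r-1}\Bigg(\sum_{j=1}^{i} x_j\,y_{i,i}+\sum_{j=i+1}^{r} x_i\,y_{i,j}\Bigg). \]
   Context: A rooted tree has its edges oriented towards the root; the head of an edge is the father of its tail (the son). For a non-root vertex $v$ of a rooted tree $T$, $f_T(v)$ denotes its father. Descendants of a vertex are its sons and, recursively, descendants of its sons. An unordered increasing tree with vertex-set $\{1,\dots,r\}$ is a rooted tree on these labelled vertices (sons of a vertex are not ordered) such that the label of each son is larger than the label of its father (so the root is $1$). The hook $\mathfrak{h}_T(v)$ is the set consisting of $v$ and all its descendants in $T$. *)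

theory Defs
  imports Main
begin

text \<open>An unordered increasing tree on vertex set {1..r} (root 1) is represented by its
father map: every non-root vertex v in {2..r} has a father f v with 1 \<le> f v < v.
Outside {2..r} the map is fixed to 0 so that each tree has a unique representation.\<close>

definition inc_trees :: "nat \<Rightarrow> (nat \<Rightarrow> nat) set" where
  "inc_trees r = {f. (\<forall>v\<in>{2..r}. 1 \<le> f v \<and> f v < v) \<and> (\<forall>v. v \<notin> {2..r} \<longrightarrow> f v = 0)}"

definition father_rel :: "nat \<Rightarrow> (nat \<Rightarrow> nat) \<Rightarrow> (nat \<times> nat) set" where
  "father_rel r f = {(u, f u) | u. u \<in> {2..r}}"

definition hook :: "nat \<Rightarrow> (nat \<Rightarrow> nat) \<Rightarrow> nat \<Rightarrow> nat set" where
  "hook r f v = {u \<in> {1..r}. (u, v) \<in> (father_rel r f)\<^sup>*}"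

definition wt_y :: "nat \<Rightarrow> (nat \<Rightarrow> 'a::comm_ring_1) \<Rightarrow> (nat \<Rightarrow> nat \<Rightarrow> 'a) \<Rightarrow> (nat \<Rightarrow> nat) \<Rightarrow> 'a" where
  "wt_y r x y f = (\<Prod>v = 2..r. x (f v) * (\<Sum>u\<in>hook r f v. y v u))"

end

theory Submission
  imports Defs
begin

text \<open>Contracting the edge between the root 1 and the vertex 2 (and relabelling v as v - 1)
maps the increasing trees on {1..r+1} onto those on {1..r}. The fibre over a tree g consists
of one tree for each set D of sons of the root of g, namely the sons that are reattached to 2.
The hooks of the vertices v \<ge> 3 are the shifted hooks of g, while the hook of 2 consists of 2
and the subtrees rooted in D. Summing over D therefore splits off the factor for i = 2 and
leaves the weight of g with x(1) replaced by x(1) + x(2), x(j) by x(j + 1) and y(i, j) by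
y(i + 1, j + 1), which is the shape needed for an induction on r.\<close>

abbreviation in_subtree :: "nat \<Rightarrow> (nat \<Rightarrow> nat) \<Rightarrow> nat \<Rightarrow> nat \<Rightarrow> bool" where
  "in_subtree r f u v \<equiv> (u, v) \<in> (father_rel r f)\<^sup>*"

lemma father_rel_iff: "(a, b) \<in> father_rel r f \<longleftrightarrow> 2 \<le> a \<and> a \<le> r \<and> b = f a"
  by (auto simp: father_rel_def)

lemma in_subtree_iff:
  "in_subtree r f u v \<longleftrightarrow> u = v \<or> (2 \<le> u \<and> u \<le> r \<and> in_subtree r f (f u) v)"
proof
  assume "in_subtree r f u v"
  then show "u = v \<or> (2 \<le> u \<and> u \<le> r \<and> in_subtree r f (f u) v)"
    by (cases rule: converse_rtranclE) (auto simp: father_rel_iff)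
next
  assume "u = v \<or> (2 \<le> u \<and> u \<le> r \<and> in_subtree r f (f u) v)"
  then show "in_subtree r f u v"
    by (auto simp: father_rel_iff intro: converse_rtrancl_into_rtrancl)
qed

lemma in_subtree_outside: "\<not> (2 \<le> u \<and> u \<le> r) \<Longrightarrow> in_subtree r f u v \<longleftrightarrow> u = v"
  by (subst in_subtree_iff) auto

lemma inc_treesD: "f \<in> inc_trees r \<Longrightarrow> 2 \<le> v \<Longrightarrow> v \<le> r \<Longrightarrow> 1 \<le> f v \<and> f v < v"
  by (auto simp: inc_trees_def)

lemma inc_trees_outside: "f \<in> inc_trees r \<Longrightarrow> \<not> (2 \<le> v \<and> v \<le> r) \<Longrightarrow> f v = 0"
  by (auto simp: inc_trees_def)

lemma finite_inc_trees: "finite (inc_trees r)"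
proof -
  have "inc_trees r \<subseteq> {f. \<forall>v. (v \<in> {2..r} \<longrightarrow> f v \<in> {..r}) \<and> (v \<notin> {2..r} \<longrightarrow> f v = 0)}"
    by (auto simp: inc_trees_def dest!: bspec)
  moreover have "finite \<dots>"
    by (rule finite_set_of_finite_funs) auto
  ultimately show ?thesis
    by (rule finite_subset)
qed

lemma inc_trees_2: "inc_trees 2 = {\<lambda>v. if v = 2 then 1 else 0}"
proof -
  have "f v = (if v = 2 then 1 else 0)" if "f \<in> inc_trees 2" for f v
    using inc_treesD[OF that, of 2] inc_trees_outside[OF that, of v] by auto
  then show ?thesis
    by (auto simp: inc_trees_def)
qed

lemma sum_Pow_prod_if:
  fixes a b :: "'a::comm_semiring_1"
  assumes "finite C"
  shows "(\<Sum>D\<in>Pow C. \<Prod>w\<in>C. if w \<in> D then b else a) = (a + b) ^ card C"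
proof -
  have "(a + b) ^ card C = (\<Prod>w\<in>C. b + a)"
    by (simp add: add.commute)
  also have "\<dots> = (\<Sum>D\<in>Pow C. (\<Prod>w\<in>D. b) * (\<Prod>w\<in>C - D. a))"
    by (rule prod_add[OF assms])
  also have "\<dots> = (\<Sum>D\<in>Pow C. \<Prod>w\<in>C. if w \<in> D then b else a)"
    using assms by (intro sum.cong refl) (auto simp: prod.If_cases Diff_eq Int_absorb1)
  finally show ?thesis
    by simp
qed

lemma sum_Pow_mem_prod_if:
  fixes a b :: "'a::comm_semiring_1"
  assumes "finite C" "c \<in> C"
  shows "(\<Sum>D\<in>Pow C. if c \<in> D then \<Prod>w\<in>C. if w \<in> D then b else a else 0)
    = b * (a + b) ^ (card C - 1)"
proof -
  have "(\<Sum>D\<in>Pow C. if c \<in> D then \<Prod>w\<in>C. if w \<in> D then b else a else 0)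
      = (\<Sum>D\<in>Pow C. \<Prod>w\<in>C. if w \<in> D then b else if w = c then 0 else a)"
  proof (intro sum.cong refl)
    fix D assume "D \<in> Pow C"
    show "(if c \<in> D then \<Prod>w\<in>C. if w \<in> D then b else a else 0)
        = (\<Prod>w\<in>C. if w \<in> D then b else if w = c then 0 else a)"
      using assms by (cases "c \<in> D") (auto intro!: prod.cong prod_zero)
  qed
  also have "\<dots> = (\<Prod>w\<in>C. b + (if w = c then 0 else a))"
    by (subst prod_add[OF assms(1)])
      (use assms in \<open>auto intro!: sum.cong simp: prod.If_cases Diff_eq Int_absorb1\<close>)
  also have "\<dots> = b * (a + b) ^ (card C - 1)"
    using assms by (simp add: prod.remove card_Diff_singleton add.commute)
  finally show ?thesis .
qed

definition root_sons :: "nat \<Rightarrow> (nat \<Rightarrow> nat) \<Rightarrow> nat set" where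
  "root_sons r g = {w. 2 \<le> w \<and> w \<le> r \<and> g w = 1}"

text \<open>The tree on {1..r+1} obtained from g by splitting its root into 1 and 2: the vertex v \<ge> 3
corresponds to v - 1 in g, and a son w of the root of g is attached to 2 iff w \<in> D.\<close>

definition split_root :: "nat \<Rightarrow> (nat \<Rightarrow> nat) \<Rightarrow> nat set \<Rightarrow> nat \<Rightarrow> nat" where
  "split_root r g D v =
    (if 3 \<le> v \<and> v \<le> Suc r then
       if g (v - 1) = 1 then if v - 1 \<in> D then 2 else 1 else Suc (g (v - 1))
     else if v = 2 then 1 else 0)"

definition contract_root :: "nat \<Rightarrow> (nat \<Rightarrow> nat) \<Rightarrow> nat \<Rightarrow> nat" where
  "contract_root r f w =
    (if 2 \<le> w \<and> w \<le> r then if f (Suc w) \<le> 2 then 1 else f (Suc w) - 1 else 0)"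

definition sons_of_two :: "nat \<Rightarrow> (nat \<Rightarrow> nat) \<Rightarrow> nat set" where
  "sons_of_two r f = {w. 2 \<le> w \<and> w \<le> r \<and> f (Suc w) = 2}"

lemma finite_root_sons: "finite (root_sons r g)"
  by (rule finite_subset[of _ "{2..r}"]) (auto simp: root_sons_def)

lemma split_root_in_inc_trees:
  assumes "g \<in> inc_trees r" "1 \<le> r"
  shows "split_root r g D \<in> inc_trees (Suc r)"
proof -
  have "1 \<le> split_root r g D v \<and> split_root r g D v < v" if "2 \<le> v" "v \<le> Suc r" for v
  proof (cases "v = 2")
    case False
    with that have "2 \<le> v - 1" "v - 1 \<le> r"
      by auto
    with False inc_treesD[OF assms(1) this] show ?thesis
      by (auto simp: split_root_def)
  qed (simp add: split_root_def)
  then show ?thesis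
    using assms(2) by (auto simp: inc_trees_def split_root_def)
qed

lemma contract_root_in_inc_trees:
  assumes "f \<in> inc_trees (Suc r)"
  shows "contract_root r f \<in> inc_trees r"
proof -
  have "1 \<le> contract_root r f w \<and> contract_root r f w < w" if "2 \<le> w" "w \<le> r" for w
    using that inc_treesD[OF assms, of "Suc w"] by (auto simp: contract_root_def)
  then show ?thesis
    by (auto simp: inc_trees_def contract_root_def)
qed

lemma sons_of_two_subset: "sons_of_two r f \<subseteq> root_sons r (contract_root r f)"
  by (auto simp: sons_of_two_def root_sons_def contract_root_def)

lemma contract_split_root:
  assumes "g \<in> inc_trees r"
  shows "contract_root r (split_root r g D) = g"
proof
  fix w
  show "contract_root r (split_root r g D) w = g w"
    using inc_treesD[OF assms, of w] inc_trees_outside[OF assms, of w]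
    by (auto simp: contract_root_def split_root_def)
qed

lemma sons_of_two_split_root:
  "D \<subseteq> root_sons r g \<Longrightarrow> sons_of_two r (split_root r g D) = D"
  by (auto simp: sons_of_two_def split_root_def root_sons_def)

lemma split_contract_root:
  assumes "f \<in> inc_trees (Suc r)" "1 \<le> r"
  shows "split_root r (contract_root r f) (sons_of_two r f) = f"
proof
  fix v
  show "split_root r (contract_root r f) (sons_of_two r f) v = f v"
    using inc_treesD[OF assms(1), of v] inc_trees_outside[OF assms(1), of v] assms(2)
    by (cases "v = 2") (auto simp: split_root_def contract_root_def sons_of_two_def)
qed

lemma bij_betw_split_root:
  assumes "1 \<le> r"
  shows "bij_betw (\<lambda>(g, D). split_root r g D)
    (SIGMA g:inc_trees r. Pow (root_sons r g)) (inc_trees (Suc r))"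
  by (rule bij_betw_byWitness[where f' = "\<lambda>f. (contract_root r f, sons_of_two r f)"])
    (use assms sons_of_two_subset in \<open>auto simp: contract_split_root sons_of_two_split_root
      split_contract_root split_root_in_inc_trees contract_root_in_inc_trees\<close>)

function top_ancestor :: "(nat \<Rightarrow> nat) \<Rightarrow> nat \<Rightarrow> nat" where
  "top_ancestor g w = (if 2 \<le> g w \<and> g w < w then top_ancestor g (g w) else w)"
  by auto
termination
  by (relation "measure snd") auto

declare top_ancestor.simps [simp del]

lemma top_ancestor_in_root_sons:
  assumes "g \<in> inc_trees r" "2 \<le> w" "w \<le> r"
  shows "top_ancestor g w \<in> root_sons r g"
  using assms(2,3)
proof (induction w rule: less_induct)
  case (less w)
  with inc_treesD[OF assms(1)] have "1 \<le> g w" "g w < w"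
    by auto
  with less show ?case
    by (cases "g w = 1") (auto simp: top_ancestor.simps root_sons_def)
qed

context
  fixes r g and D :: "nat set"
  assumes r: "2 \<le> r" and g: "g \<in> inc_trees r"
begin

lemma split_root_less:
  assumes "3 \<le> u" "u \<le> Suc r"
  shows "split_root r g D u < u"
proof -
  have "split_root r g D \<in> inc_trees (Suc r)"
    using split_root_in_inc_trees[OF g] r by simp
  with assms show ?thesis
    using inc_treesD by simp
qed

lemma in_subtree_split_root_Suc:
  assumes "2 \<le> w" "w \<le> r"
  shows "in_subtree (Suc r) (split_root r g D) u (Suc w) \<longleftrightarrow> 2 \<le> u \<and> in_subtree r g (u - 1) w"
proof (induction u rule: less_induct)
  case (less u)
  show ?case
  proof (cases "3 \<le> u \<and> u \<le> Suc r")
    case True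
    have gu: "1 \<le> g (u - 1)" "g (u - 1) < u - 1"
      using inc_treesD[OF g, of "u - 1"] True by auto
    have split: "in_subtree (Suc r) (split_root r g D) u (Suc w) \<longleftrightarrow>
        u = Suc w \<or> in_subtree (Suc r) (split_root r g D) (split_root r g D u) (Suc w)"
      using True by (subst in_subtree_iff) auto
    have contracted: "in_subtree r g (u - 1) w \<longleftrightarrow> u - 1 = w \<or> in_subtree r g (g (u - 1)) w"
      using True by (subst in_subtree_iff) auto
    have "split_root r g D u < u"
      using True by (intro split_root_less) auto
    note IH = less.IH[OF this]
    show ?thesis
    proof (cases "g (u - 1) = 1")
      case True1: True
      then have "split_root r g D u \<le> 2"
        using True by (auto simp: split_root_def)
      then have "\<not> in_subtree (Suc r) (split_root r g D) (split_root r g D u) (Suc w)"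
        using IH in_subtree_outside[where u = 1] assms by (auto simp: le_Suc_eq)
      moreover have "\<not> in_subtree r g 1 w"
        using in_subtree_outside[where u = 1] assms by auto
      ultimately show ?thesis
        using split contracted True1 True by auto
    next
      case False
      then have "split_root r g D u = Suc (g (u - 1))"
        using True by (simp add: split_root_def)
      then show ?thesis
        using split contracted IH True False gu by auto
    qed
  next
    case False
    have "in_subtree (Suc r) (split_root r g D) u (Suc w) \<longleftrightarrow>
        u = Suc w \<or> (u = 2 \<and> in_subtree (Suc r) (split_root r g D) 1 (Suc w))"
      using False r by (subst in_subtree_iff) (auto simp: split_root_def)
    moreover have "\<not> in_subtree (Suc r) (split_root r g D) 1 (Suc w)"
      using in_subtree_outside[where u = 1] assms by auto
    moreover have "in_subtree r g (u - 1) w \<longleftrightarrow> u - 1 = w"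
      using False by (intro in_subtree_outside) auto
    ultimately show ?thesis
      using False assms by auto
  qed
qed

lemma hook_split_root_Suc:
  assumes "2 \<le> w" "w \<le> r"
  shows "hook (Suc r) (split_root r g D) (Suc w) = Suc ` hook r g w"
proof -
  have "hook (Suc r) (split_root r g D) (Suc w) = {u \<in> {1..Suc r}. 2 \<le> u \<and> in_subtree r g (u - 1) w}"
    using in_subtree_split_root_Suc[OF assms] by (simp add: hook_def)
  also have "\<dots> = Suc ` hook r g w"
    by (auto simp: hook_def image_iff gr0_conv_Suc Suc_le_eq)
  finally show ?thesis .
qed

lemma in_subtree_split_root_two:
  "in_subtree (Suc r) (split_root r g D) u 2 \<longleftrightarrow>
    u = 2 \<or> (3 \<le> u \<and> u \<le> Suc r \<and> top_ancestor g (u - 1) \<in> D)"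
proof (induction u rule: less_induct)
  case (less u)
  show ?case
  proof (cases "3 \<le> u \<and> u \<le> Suc r")
    case True
    have gu: "1 \<le> g (u - 1)" "g (u - 1) < u - 1"
      using inc_treesD[OF g, of "u - 1"] True by auto
    have split: "in_subtree (Suc r) (split_root r g D) u 2 \<longleftrightarrow>
        in_subtree (Suc r) (split_root r g D) (split_root r g D u) 2"
      using True by (subst in_subtree_iff) auto
    have "split_root r g D u < u"
      using True by (intro split_root_less) auto
    note IH = less.IH[OF this]
    show ?thesis
    proof (cases "g (u - 1) = 1")
      case True1: True
      then have "top_ancestor g (u - 1) = u - 1"
        by (simp add: top_ancestor.simps)
      moreover have "in_subtree (Suc r) (split_root r g D) (split_root r g D u) 2 \<longleftrightarrow> u - 1 \<in> D"
        using True True1 in_subtree_outside[where u = 1] by (auto simp: split_root_def)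
      ultimately show ?thesis
        using split True by auto
    next
      case False
      then have "split_root r g D u = Suc (g (u - 1))"
        using True by (simp add: split_root_def)
      moreover have "top_ancestor g (u - 1) = top_ancestor g (g (u - 1))"
        using False gu by (simp add: top_ancestor.simps)
      ultimately show ?thesis
        using split IH True False gu by auto
    qed
  next
    case False
    then have "in_subtree (Suc r) (split_root r g D) u 2 \<longleftrightarrow> u = 2"
      using r by (subst in_subtree_iff) (auto simp: split_root_def)
    then show ?thesis
      using False by auto
  qed
qed

lemma hook_split_root_two:
  "hook (Suc r) (split_root r g D) 2 = insert 2 {u \<in> {3..Suc r}. top_ancestor g (u - 1) \<in> D}"
  using r by (auto simp: hook_def in_subtree_split_root_two)

end

definition hook_sum :: "nat \<Rightarrow> (nat \<Rightarrow> nat) \<Rightarrow> (nat \<Rightarrow> nat \<Rightarrow> 'a::comm_ring_1) \<Rightarrow> nat \<Rightarrow> 'a" where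
  "hook_sum r f y v = (\<Sum>u\<in>hook r f v. y v u)"

text \<open>The weight wt_y without the factor x (f 2), which is always x 1.\<close>

definition reduced_wt ::
    "nat \<Rightarrow> (nat \<Rightarrow> 'a::comm_ring_1) \<Rightarrow> (nat \<Rightarrow> nat \<Rightarrow> 'a) \<Rightarrow> (nat \<Rightarrow> nat) \<Rightarrow> 'a" where
  "reduced_wt r x y f = hook_sum r f y 2 * (\<Prod>v = 3..r. x (f v) * hook_sum r f y v)"

definition merge_x :: "(nat \<Rightarrow> 'a::comm_ring_1) \<Rightarrow> nat \<Rightarrow> 'a" where
  "merge_x x j = (if j = 1 then x 1 + x 2 else x (Suc j))"

definition shift_y :: "(nat \<Rightarrow> nat \<Rightarrow> 'a) \<Rightarrow> nat \<Rightarrow> nat \<Rightarrow> 'a" where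
  "shift_y y i j = y (Suc i) (Suc j)"

definition Q_factor :: "nat \<Rightarrow> (nat \<Rightarrow> 'a::comm_ring_1) \<Rightarrow> (nat \<Rightarrow> nat \<Rightarrow> 'a) \<Rightarrow> nat \<Rightarrow> 'a" where
  "Q_factor r x y i = (\<Sum>j = 1..i. x j * y i i) + (\<Sum>j = i + 1..r. x i * y i j)"

lemma wt_y_eq_reduced_wt:
  assumes "2 \<le> r" "f \<in> inc_trees r"
  shows "wt_y r x y f = x 1 * reduced_wt r x y f"
proof -
  have "{2..r} = insert 2 {3..r}"
    using assms(1) by auto
  moreover have "f 2 = 1"
    using inc_treesD[OF assms(2), of 2] assms(1) by auto
  ultimately show ?thesis
    by (simp add: wt_y_def reduced_wt_def hook_sum_def mult_ac)
qed

context
  fixes r g and x :: "nat \<Rightarrow> 'a::comm_ring_1" and y :: "nat \<Rightarrow> nat \<Rightarrow> 'a"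
  assumes r: "2 \<le> r" and g: "g \<in> inc_trees r"
begin

lemma two_in_root_sons: "2 \<in> root_sons r g"
  using inc_treesD[OF g, of 2] r by (auto simp: root_sons_def)

lemma root_sons_subset: "root_sons r g \<subseteq> {2..r}"
  by (auto simp: root_sons_def)

lemma reduced_wt_split_root:
  "reduced_wt (Suc r) x y (split_root r g D) =
    hook_sum (Suc r) (split_root r g D) y 2 * (\<Prod>w\<in>root_sons r g. if w \<in> D then x 2 else x 1) *
    ((\<Prod>w = 2..r. hook_sum r g (shift_y y) w) * (\<Prod>w\<in>{2..r} - root_sons r g. merge_x x (g w)))"
proof -
  let ?f = "split_root r g D"
  have "(\<Prod>v = 3..Suc r. x (?f v) * hook_sum (Suc r) ?f y v)
      = (\<Prod>w = 2..r. x (?f (Suc w)) * hook_sum (Suc r) ?f y (Suc w))"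
    by (simp add: prod.shift_bounds_cl_Suc_ivl numeral_3_eq_3 numeral_2_eq_2 del: prod.cl_ivl_Suc)
  also have "\<dots> = (\<Prod>w = 2..r. x (?f (Suc w))) * (\<Prod>w = 2..r. hook_sum r g (shift_y y) w)"
    using hook_split_root_Suc[OF r g]
    by (simp add: prod.distrib hook_sum_def sum.reindex shift_y_def del: prod.cl_ivl_Suc)
  also have "(\<Prod>w = 2..r. x (?f (Suc w)))
      = (\<Prod>w\<in>{2..r} - root_sons r g. x (?f (Suc w))) * (\<Prod>w\<in>root_sons r g. x (?f (Suc w)))"
    by (rule prod.subset_diff[OF root_sons_subset]) simp
  also have "(\<Prod>w\<in>{2..r} - root_sons r g. x (?f (Suc w))) = (\<Prod>w\<in>{2..r} - root_sons r g. merge_x x (g w))"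
    using inc_treesD[OF g] by (intro prod.cong) (auto simp: split_root_def merge_x_def root_sons_def)
  also have "(\<Prod>w\<in>root_sons r g. x (?f (Suc w))) = (\<Prod>w\<in>root_sons r g. if w \<in> D then x 2 else x 1)"
    by (intro prod.cong) (auto simp: split_root_def root_sons_def)
  finally show ?thesis
    by (simp add: reduced_wt_def mult_ac)
qed

lemma reduced_wt_merge_x:
  "reduced_wt r (merge_x x) (shift_y y) g = (x 1 + x 2) ^ (card (root_sons r g) - 1) *
    ((\<Prod>w = 2..r. hook_sum r g (shift_y y) w) * (\<Prod>w\<in>{2..r} - root_sons r g. merge_x x (g w)))"
proof -
  have "{2..r} = insert 2 {3..r}"
    using r by auto
  then have "reduced_wt r (merge_x x) (shift_y y) g
      = (\<Prod>w = 2..r. hook_sum r g (shift_y y) w) * (\<Prod>w = 3..r. merge_x x (g w))"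
    by (simp add: reduced_wt_def prod.distrib mult_ac)
  also have "(\<Prod>w = 3..r. merge_x x (g w))
      = (\<Prod>w\<in>{2..r} - root_sons r g. merge_x x (g w)) * (\<Prod>w\<in>root_sons r g - {2}. merge_x x (g w))"
  proof -
    have "w \<in> {3..r} \<longleftrightarrow> w \<in> ({2..r} - root_sons r g) \<union> (root_sons r g - {2})" for w
      using two_in_root_sons root_sons_subset by (cases "w = 2") auto
    then have "{3..r} = ({2..r} - root_sons r g) \<union> (root_sons r g - {2})"
      by blast
    then show ?thesis
      by (simp only:) (rule prod.union_disjoint, auto intro: finite_subset[OF _ finite_root_sons])
  qed
  also have "(\<Prod>w\<in>root_sons r g - {2}. merge_x x (g w)) = (x 1 + x 2) ^ (card (root_sons r g) - 1)"
    using two_in_root_sons finite_root_sons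
    by (simp add: merge_x_def root_sons_def card_Diff_singleton)
  finally show ?thesis
    by (simp add: mult_ac)
qed

lemma hook_sum_split_root_two:
  "hook_sum (Suc r) (split_root r g D) y 2 =
    y 2 2 + (\<Sum>u = 3..Suc r. if top_ancestor g (u - 1) \<in> D then y 2 u else 0)"
proof -
  have "(\<Sum>u\<in>{u \<in> {3..Suc r}. top_ancestor g (u - 1) \<in> D}. y 2 u)
      = (\<Sum>u = 3..Suc r. if top_ancestor g (u - 1) \<in> D then y 2 u else 0)"
    by (rule sum.inter_filter) simp
  then show ?thesis
    by (simp add: hook_sum_def hook_split_root_two[OF r g])
qed

lemma sum_hook_sum_split_root_two:
  "(\<Sum>D\<in>Pow (root_sons r g). hook_sum (Suc r) (split_root r g D) y 2 *
      (\<Prod>w\<in>root_sons r g. if w \<in> D then x 2 else x 1))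
    = (x 1 + x 2) ^ (card (root_sons r g) - 1) * Q_factor (Suc r) x y 2"
proof -
  let ?C = "root_sons r g"
  let ?E = "\<lambda>D. \<Prod>w\<in>?C. if w \<in> D then x 2 else x 1"
  let ?m = "card ?C"
  have "hook_sum (Suc r) (split_root r g D) y 2 * ?E D = y 2 2 * ?E D +
      (\<Sum>u = 3..Suc r. y 2 u * (if top_ancestor g (u - 1) \<in> D then ?E D else 0))" for D
    unfolding hook_sum_split_root_two distrib_right sum_distrib_right
    by (intro arg_cong2[where f = "(+)"] sum.cong) auto
  then have "(\<Sum>D\<in>Pow ?C. hook_sum (Suc r) (split_root r g D) y 2 * ?E D)
      = y 2 2 * (\<Sum>D\<in>Pow ?C. ?E D) +
        (\<Sum>u = 3..Suc r. y 2 u * (\<Sum>D\<in>Pow ?C. if top_ancestor g (u - 1) \<in> D then ?E D else 0))"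
    by (simp add: sum.distrib sum_distrib_left sum.swap[of _ "Pow ?C"] del: sum.cl_ivl_Suc)
  also have "(\<Sum>D\<in>Pow ?C. ?E D) = (x 1 + x 2) ^ ?m"
    by (rule sum_Pow_prod_if[OF finite_root_sons])
  also have "(\<Sum>u = 3..Suc r. y 2 u * (\<Sum>D\<in>Pow ?C. if top_ancestor g (u - 1) \<in> D then ?E D else 0))
      = (\<Sum>u = 3..Suc r. y 2 u * (x 2 * (x 1 + x 2) ^ (?m - 1)))"
  proof (intro sum.cong refl)
    fix u assume "u \<in> {3..Suc r}"
    then have "top_ancestor g (u - 1) \<in> ?C"
      by (intro top_ancestor_in_root_sons[OF g]) auto
    then show "y 2 u * (\<Sum>D\<in>Pow ?C. if top_ancestor g (u - 1) \<in> D then ?E D else 0)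
        = y 2 u * (x 2 * (x 1 + x 2) ^ (?m - 1))"
      by (simp only: sum_Pow_mem_prod_if[OF finite_root_sons])
  qed
  also have "(x 1 + x 2) ^ ?m = (x 1 + x 2) * (x 1 + x 2) ^ (?m - 1)"
  proof -
    have "?m \<noteq> 0"
      using two_in_root_sons finite_root_sons[of r g] by auto
    then show ?thesis
      by (simp add: power_eq_if)
  qed
  moreover have "Q_factor (Suc r) x y 2 = (x 1 + x 2) * y 2 2 + (\<Sum>u = 3..Suc r. x 2 * y 2 u)"
    by (simp add: Q_factor_def numeral_2_eq_2 numeral_3_eq_3 distrib_right)
  ultimately show ?thesis
    by (simp add: algebra_simps sum_distrib_left del: sum.cl_ivl_Suc)
qed

lemma sum_reduced_wt_split_root:
  "(\<Sum>D\<in>Pow (root_sons r g). reduced_wt (Suc r) x y (split_root r g D))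
    = Q_factor (Suc r) x y 2 * reduced_wt r (merge_x x) (shift_y y) g"
proof -
  have "(\<Sum>D\<in>Pow (root_sons r g). reduced_wt (Suc r) x y (split_root r g D))
      = (\<Sum>D\<in>Pow (root_sons r g). hook_sum (Suc r) (split_root r g D) y 2 *
          (\<Prod>w\<in>root_sons r g. if w \<in> D then x 2 else x 1)) *
        ((\<Prod>w = 2..r. hook_sum r g (shift_y y) w) * (\<Prod>w\<in>{2..r} - root_sons r g. merge_x x (g w)))"
    by (simp only: reduced_wt_split_root sum_distrib_right)
  then show ?thesis
    by (simp only: sum_hook_sum_split_root_two reduced_wt_merge_x mult_ac)
qed

end

lemma sum_reduced_wt_Suc:
  assumes "2 \<le> r"
  shows "(\<Sum>f\<in>inc_trees (Suc r). reduced_wt (Suc r) x y f)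
    = Q_factor (Suc r) x y 2 * (\<Sum>g\<in>inc_trees r. reduced_wt r (merge_x x) (shift_y y) g)"
proof -
  have "(\<Sum>f\<in>inc_trees (Suc r). reduced_wt (Suc r) x y f)
      = (\<Sum>(g, D)\<in>(SIGMA g:inc_trees r. Pow (root_sons r g)). reduced_wt (Suc r) x y (split_root r g D))"
    using sum.reindex_bij_betw[OF bij_betw_split_root, of r "reduced_wt (Suc r) x y"] assms
    by (simp add: case_prod_beta')
  also have "\<dots> = (\<Sum>g\<in>inc_trees r. \<Sum>D\<in>Pow (root_sons r g). reduced_wt (Suc r) x y (split_root r g D))"
    by (rule sum.Sigma[symmetric]) (auto simp: finite_inc_trees finite_root_sons)
  also have "\<dots> = (\<Sum>g\<in>inc_trees r. Q_factor (Suc r) x y 2 * reduced_wt r (merge_x x) (shift_y y) g)"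
    by (intro sum.cong refl sum_reduced_wt_split_root[OF assms])
  finally show ?thesis
    by (simp add: sum_distrib_left)
qed

lemma sum_merge_x: "1 \<le> i \<Longrightarrow> (\<Sum>j = 1..i. merge_x x j) = (\<Sum>j = 1..Suc i. x j)"
  by (induction i rule: dec_induct) (simp_all add: merge_x_def numeral_2_eq_2)

lemma Q_factor_merge_x:
  assumes "2 \<le> i"
  shows "Q_factor r (merge_x x) (shift_y y) i = Q_factor (Suc r) x y (Suc i)"
proof -
  have "(\<Sum>j = 1..i. merge_x x j * shift_y y i i) = (\<Sum>j = 1..Suc i. x j * y (Suc i) (Suc i))"
    using assms by (simp only: shift_y_def sum_distrib_right[symmetric] sum_merge_x)
  moreover have "(\<Sum>j = i + 1..r. merge_x x i * shift_y y i j)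
      = (\<Sum>j = Suc i + 1..Suc r. x (Suc i) * y (Suc i) j)"
    using assms by (simp add: merge_x_def shift_y_def sum.shift_bounds_cl_Suc_ivl del: sum.cl_ivl_Suc)
  ultimately show ?thesis
    by (simp add: Q_factor_def del: sum.cl_ivl_Suc)
qed

lemma sum_reduced_wt:
  assumes "2 \<le> r"
  shows "(\<Sum>f\<in>inc_trees r. reduced_wt r x y f) = y r r * (\<Prod>i = 2..r - 1. Q_factor r x y i)"
  using assms
proof (induction r arbitrary: x y rule: dec_induct)
  case base
  have "{1..2::nat} = {1, 2}"
    by auto
  then have "hook 2 (\<lambda>v. if v = 2 then 1 else 0) 2 = {2}"
    using in_subtree_outside[where u = 1 and r = 2] by (auto simp: hook_def)
  then show ?case
    by (simp add: inc_trees_2 reduced_wt_def hook_sum_def)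
next
  case (step r)
  have "(\<Sum>f\<in>inc_trees (Suc r). reduced_wt (Suc r) x y f)
      = Q_factor (Suc r) x y 2 * (shift_y y r r * (\<Prod>i = 2..r - 1. Q_factor r (merge_x x) (shift_y y) i))"
    by (simp only: sum_reduced_wt_Suc[OF step.hyps(1)] step.IH)
  also have "(\<Prod>i = 2..r - 1. Q_factor r (merge_x x) (shift_y y) i) = (\<Prod>i = 2..r - 1. Q_factor (Suc r) x y (Suc i))"
    by (intro prod.cong refl Q_factor_merge_x) auto
  also have "\<dots> = (\<Prod>i = 3..r. Q_factor (Suc r) x y i)"
  proof -
    obtain m where "r = Suc m"
      using step.hyps(1) by (cases r) auto
    moreover have "(3::nat) = Suc 2"
      by simp
    ultimately show ?thesis
      by (simp only: prod.shift_bounds_cl_Suc_ivl diff_Suc_1)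
  qed
  also have "Q_factor (Suc r) x y 2 * (shift_y y r r * (\<Prod>i = 3..r. Q_factor (Suc r) x y i))
      = y (Suc r) (Suc r) * (\<Prod>i = 2..Suc r - 1. Q_factor (Suc r) x y i)"
  proof -
    have "{2..Suc r - 1} = insert 2 {3..r}"
      using step.hyps(1) by auto
    then show ?thesis
      by (simp add: shift_y_def mult_ac del: prod.cl_ivl_Suc)
  qed
  finally show ?case .
qed

theorem theorem1p1:
  fixes r :: nat and x :: "nat \<Rightarrow> 'a::comm_ring_1" and y :: "nat \<Rightarrow> nat \<Rightarrow> 'a"
  assumes "r \<ge> 2"
  shows "(\<Sum>T\<in>inc_trees r. wt_y r x y T) =
    x 1 * y r r * (\<Prod>i = 2..r - 1. (\<Sum>j = 1..i. x j * y i i) + (\<Sum>j = i + 1..r. x i * y i j))"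
proof -
  have "(\<Sum>T\<in>inc_trees r. wt_y r x y T) = x 1 * (\<Sum>T\<in>inc_trees r. reduced_wt r x y T)"
    using assms by (simp add: wt_y_eq_reduced_wt sum_distrib_left)
  also have "\<dots> = x 1 * y r r * (\<Prod>i = 2..r - 1. Q_factor r x y i)"
    by (simp only: sum_reduced_wt[OF assms] mult.assoc)
  finally show ?thesis
    by (simp add: Q_factor_def)
qed

end
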